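(* (i) For every $\epsilon>0$ there exist $\beta,\gamma\in\mathcal{I}_\alpha$ with $d_H(\beta,\gamma)<\epsilon$ and $d_\alpha(\beta,\gamma)>1/\epsilon$. (ii) For all $\beta,\gamma\in\mathcal{I}_\alpha$, $d_H'(\beta,\gamma)\le d_\alpha(\beta,\gamma)$. (iii) The metrics $d_H$ and $d_H'$ generate the same topology on $\mathcal{I}_H$.
   Context: Fix $\alpha\in(0,1)$. An interval partition is a set $\beta$ of disjoint open subintervals (blocks) of some interval $[0,L]$ that cover $[0,L]$ up to a Lebesgue-null set; write $\|\beta\|:=L$ and $\mathrm{Leb}(U)$ for the length of a block $U$. $\mathcal{I}_H$ is the set of all interval partitions. For $\beta\in\mathcal{I}_H$ let $C_\beta:=[0,\|\beta\|]\setminus\bigcup_{U\in\beta}U$, and $d_H(\beta,\gamma)$ the Hausdorff distance between $C_\beta$ and $C_\gamma$. $\beta$ has the $\alpha$-diversity property if for every $t\in[0,\|\beta\|]$ the limit $\mathscr{D}_\beta(t):=\Gamma(1-\alpha)\lim_{h\downarrow0}h^\alpha\#\{(a,b)\in\beta\colon b-a>h,\ b\le t\}$ exists; $\mathcal{I}_\alpha$ is the set of such partitions. For $U\in\beta$, $\mathscr{D}_\beta(U):=\mathscr{D}_\beta(t)$ for $t\in U$; $\mathscr{D}_\beta(\infty):=\mathscr{D}_\beta(\|\beta\|)$. A correspondence between $\beta,\gamma$ is a finite sequence $(U_j,V_j)_{j\in[n]}$, $n\ge0$, of pairs in $\beta\times\gamma$ with $(U_j)_j$ and $(V_j)_j$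 each strictly increasing in left-to-right order. Its Hausdorff distortion is the maximum of (i') $\sum_{j}|\mathrm{Leb}(U_j)-\mathrm{Leb}(V_j)|+\|\beta\|-\sum_j\mathrm{Leb}(U_j)$ and (ii') $\sum_{j}|\mathrm{Leb}(U_j)-\mathrm{Leb}(V_j)|+\|\gamma\|-\sum_j\mathrm{Leb}(V_j)$; for $\beta,\gamma\in\mathcal{I}_\alpha$ its $\alpha$-distortion is the maximum of (i'), (ii'), $\sup_j|\mathscr{D}_\beta(U_j)-\mathscr{D}_\gamma(V_j)|$ and $|\mathscr{D}_\beta(\infty)-\mathscr{D}_\gamma(\infty)|$. $d_H'$ and $d_\alpha$ are the infima over all correspondences of the Hausdorff distortion and the $\alpha$-distortion, respectively. *)

theory Defs
  imports "HOL-Analysis.Analysis"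
begin

text \<open>A block (a,b) stands for the open interval with endpoints a < b.
  An interval partition is a set of such pairs.\<close>

type_synonym block = "real \<times> real"

definition block_set :: "block \<Rightarrow> real set" where
  "block_set U = {fst U<..<snd U}"

definition Leb :: "block \<Rightarrow> real" where
  "Leb U = snd U - fst U"

definition is_IP_of :: "real \<Rightarrow> block set \<Rightarrow> bool" where
  "is_IP_of L \<beta> \<longleftrightarrow> 0 \<le> L
     \<and> (\<forall>U\<in>\<beta>. 0 \<le> fst U \<and> fst U < snd U \<and> snd U \<le> L)
     \<and> (\<forall>U\<in>\<beta>. \<forall>V\<in>\<beta>. U \<noteq> V \<longrightarrow> block_set U \<inter> block_set V = {})
     \<and> {0..L} - (\<Union>U\<in>\<beta>. block_set U) \<in> null_sets lborel"

definition IH :: "block set set" where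
  "IH = {\<beta>. \<exists>L. is_IP_of L \<beta>}"

definition IP_norm :: "block set \<Rightarrow> real" where
  "IP_norm \<beta> = (THE L. is_IP_of L \<beta>)"

definition Cset :: "block set \<Rightarrow> real set" where
  "Cset \<beta> = {0..IP_norm \<beta>} - (\<Union>U\<in>\<beta>. block_set U)"

definition hausdorff_dist :: "real set \<Rightarrow> real set \<Rightarrow> real" where
  "hausdorff_dist A B = max (SUP x\<in>A. infdist x B) (SUP y\<in>B. infdist y A)"

definition dH :: "block set \<Rightarrow> block set \<Rightarrow> real" where
  "dH \<beta> \<gamma> = hausdorff_dist (Cset \<beta>) (Cset \<gamma>)"

definition div_count :: "block set \<Rightarrow> real \<Rightarrow> real \<Rightarrow> real" where
  "div_count \<beta> t h = real (card {U\<in>\<beta>. Leb U > h \<and> snd U \<le> t})"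

definition IA :: "real \<Rightarrow> block set set" where
  "IA \<alpha> = {\<beta>\<in>IH. \<forall>t\<in>{0..IP_norm \<beta>}.
             \<exists>l. ((\<lambda>h. h powr \<alpha> * div_count \<beta> t h) \<longlongrightarrow> l) (at_right 0)}"

definition Div :: "real \<Rightarrow> block set \<Rightarrow> real \<Rightarrow> real" where
  "Div \<alpha> \<beta> t = Gamma (1 - \<alpha>) * Lim (at_right 0) (\<lambda>h. h powr \<alpha> * div_count \<beta> t h)"

text \<open>Diversity of a block: value at any point of the block (here its midpoint).\<close>
definition Div_block :: "real \<Rightarrow> block set \<Rightarrow> block \<Rightarrow> real" where
  "Div_block \<alpha> \<beta> U = Div \<alpha> \<beta> ((fst U + snd U) / 2)"

definition Div_inf :: "real \<Rightarrow> block set \<Rightarrow> real" where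
  "Div_inf \<alpha> \<beta> = Div \<alpha> \<beta> (IP_norm \<beta>)"

definition correspondence :: "block set \<Rightarrow> block set \<Rightarrow> (block \<times> block) list \<Rightarrow> bool" where
  "correspondence \<beta> \<gamma> cs \<longleftrightarrow>
     (\<forall>p\<in>set cs. fst p \<in> \<beta> \<and> snd p \<in> \<gamma>)
     \<and> sorted_wrt (\<lambda>p q. fst (fst p) < fst (fst q)) cs
     \<and> sorted_wrt (\<lambda>p q. fst (snd p) < fst (snd q)) cs"

definition dis_H :: "block set \<Rightarrow> block set \<Rightarrow> (block \<times> block) list \<Rightarrow> real" where
  "dis_H \<beta> \<gamma> cs =
     (let S = (\<Sum>p\<leftarrow>cs. \<bar>Leb (fst p) - Leb (snd p)\<bar>) in
      max (S + IP_norm \<beta> - (\<Sum>p\<leftarrow>cs. Leb (fst p)))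
          (S + IP_norm \<gamma> - (\<Sum>p\<leftarrow>cs. Leb (snd p))))"

text \<open>The supremum over j of the diversity differences (0 for the empty correspondence;
  all other terms are nonnegative so this convention is harmless).\<close>
definition dis_alpha :: "real \<Rightarrow> block set \<Rightarrow> block set \<Rightarrow> (block \<times> block) list \<Rightarrow> real" where
  "dis_alpha \<alpha> \<beta> \<gamma> cs =
     max (dis_H \<beta> \<gamma> cs)
       (max (Max (insert 0 ((\<lambda>p. \<bar>Div_block \<alpha> \<beta> (fst p) - Div_block \<alpha> \<gamma> (snd p)\<bar>) ` set cs)))
            \<bar>Div_inf \<alpha> \<beta> - Div_inf \<alpha> \<gamma>\<bar>)"

definition dH' :: "block set \<Rightarrow> block set \<Rightarrow> real" where
  "dH' \<beta> \<gamma> = Inf {dis_H \<beta> \<gamma> cs | cs. correspondence \<beta> \<gamma> cs}"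

definition d_alpha :: "real \<Rightarrow> block set \<Rightarrow> block set \<Rightarrow> real" where
  "d_alpha \<alpha> \<beta> \<gamma> = Inf {dis_alpha \<alpha> \<beta> \<gamma> cs | cs. correspondence \<beta> \<gamma> cs}"

definition metric_open :: "'a set \<Rightarrow> ('a \<Rightarrow> 'a \<Rightarrow> real) \<Rightarrow> 'a set \<Rightarrow> bool" where
  "metric_open X d S \<longleftrightarrow> S \<subseteq> X \<and> (\<forall>x\<in>S. \<exists>e>0. \<forall>y\<in>X. d x y < e \<longrightarrow> y \<in> S)"

end

theory Submission
  imports Defs
begin

(*
  (i) Laying blocks of lengths (c / (n + N + 1)) powr (1 / alpha) end to end gives a partition
  with about c * h powr (- alpha) blocks longer than h, hence total diversity Gamma (1 - alpha) * c,
  while its length is a tail of a convergent series and so as small as we like.  Against the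
  empty partition its Hausdorff distance is at most its length, but its alpha-distance is at
  least its total diversity.

  (ii) The alpha-distortion of a correspondence dominates its Hausdorff distortion.

  (iii) Cutting a correspondence at a point x of C_beta and at the corresponding point y of
  C_gamma bounds |x - y| by the distortion, so d_H <= d_H'.  Conversely, finitely many blocks
  carry almost all of the length of beta; once d_H(beta, gamma) is small compared to their
  lengths, each of them has a partner block in gamma with nearby endpoints, and pairing them
  gives a correspondence of small distortion.
*)

section \<open>Interval partitions\<close>

lemma is_IP_of_unique:
  assumes "is_IP_of L \<beta>" and "is_IP_of L' \<beta>"
  shows "L = L'"
proof -
  have "\<not> L < L'" if L: "is_IP_of L \<beta>" and L': "is_IP_of L' \<beta>" for L L'
  proof
    assume "L < L'"
    then have sub: "{L<..<L'} \<subseteq> {0..L'} - (\<Union>U\<in>\<beta>. block_set U)"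
      using L L' unfolding is_IP_of_def block_set_def by force
    have "{L<..<L'} \<in> null_sets lborel"
      by (rule null_sets_subset[OF _ _ sub]) (use L' in \<open>simp_all add: is_IP_of_def\<close>)
    then have "emeasure lborel {L<..<L'} = 0"
      by auto
    with \<open>L < L'\<close> show False
      by simp
  qed
  with assms show ?thesis by (meson linorder_neqE_linordered_idom)
qed

lemma IP_norm_eq: "is_IP_of L \<beta> \<Longrightarrow> IP_norm \<beta> = L"
  unfolding IP_norm_def using is_IP_of_unique by blast

lemma IH_is_IP_of: "\<beta> \<in> IH \<Longrightarrow> is_IP_of (IP_norm \<beta>) \<beta>"
  unfolding IH_def using IP_norm_eq by auto

lemma IH_norm_nonneg: "\<beta> \<in> IH \<Longrightarrow> 0 \<le> IP_norm \<beta>"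
  using IH_is_IP_of unfolding is_IP_of_def by auto

lemma IH_block:
  assumes "\<beta> \<in> IH" and "U \<in> \<beta>"
  shows "0 \<le> fst U" and "fst U < snd U" and "snd U \<le> IP_norm \<beta>"
  using IH_is_IP_of[OF assms(1)] assms(2) unfolding is_IP_of_def by auto

lemma IH_Leb_pos: "\<beta> \<in> IH \<Longrightarrow> U \<in> \<beta> \<Longrightarrow> 0 < Leb U"
  using IH_block(2) by (simp add: Leb_def)

lemma IH_block_before:
  assumes \<beta>: "\<beta> \<in> IH" and U: "U \<in> \<beta>" and V: "V \<in> \<beta>" and "fst U \<le> fst V" and "U \<noteq> V"
  shows "snd U \<le> fst V"
proof (rule ccontr)
  assume "\<not> snd U \<le> fst V"
  then have "(fst V + min (snd U) (snd V)) / 2 \<in> block_set U \<inter> block_set V"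
    using assms IH_block[OF \<beta> U] IH_block[OF \<beta> V] by (auto simp: block_set_def)
  then show False
    using IH_is_IP_of[OF \<beta>] U V \<open>U \<noteq> V\<close> unfolding is_IP_of_def by blast
qed

lemma IH_inj_on_fst:
  assumes \<beta>: "\<beta> \<in> IH"
  shows "inj_on fst \<beta>"
proof (rule inj_onI, rule ccontr)
  fix U V assume U: "U \<in> \<beta>" and V: "V \<in> \<beta>" and "fst U = fst V" and "U \<noteq> V"
  then have "snd U \<le> fst U"
    using IH_block_before[OF \<beta> U V] by simp
  then show False
    using IH_block(2)[OF \<beta> U] by simp
qed

lemma Cset_iff: "x \<in> Cset \<beta> \<longleftrightarrow> 0 \<le> x \<and> x \<le> IP_norm \<beta> \<and> (\<forall>U\<in>\<beta>. x \<notin> block_set U)"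
  unfolding Cset_def by auto

lemma IH_zero_in_Cset: "\<beta> \<in> IH \<Longrightarrow> 0 \<in> Cset \<beta>"
  using IH_norm_nonneg IH_block by (force simp: Cset_iff block_set_def)

lemma IH_norm_in_Cset: "\<beta> \<in> IH \<Longrightarrow> IP_norm \<beta> \<in> Cset \<beta>"
  using IH_norm_nonneg IH_block by (force simp: Cset_iff block_set_def)

lemma IH_block_ends_in_Cset:
  assumes \<beta>: "\<beta> \<in> IH" and U: "U \<in> \<beta>"
  shows "fst U \<in> Cset \<beta>" and "snd U \<in> Cset \<beta>"
proof -
  have "fst U \<notin> block_set V \<and> snd U \<notin> block_set V" if V: "V \<in> \<beta>" for V
  proof (cases "V = U")
    case False
    then have "snd U \<le> fst V \<or> snd V \<le> fst U"
      using IH_block_before[OF \<beta> U V] IH_block_before[OF \<beta> V U] by (cases "fst U \<le> fst V") auto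
    then show ?thesis
      using IH_block[OF \<beta> U] IH_block[OF \<beta> V] by (auto simp: block_set_def)
  qed (simp add: block_set_def)
  then show "fst U \<in> Cset \<beta>" "snd U \<in> Cset \<beta>"
    using IH_block[OF \<beta> U] by (auto simp: Cset_iff)
qed

lemma IH_countable:
  assumes \<beta>: "\<beta> \<in> IH"
  shows "countable \<beta>"
proof -
  have "countable (block_set ` \<beta>)"
    using IH_is_IP_of[OF \<beta>]
    by (intro countable_disjoint_open_subsets)
       (auto simp: block_set_def is_IP_of_def pairwise_def disjnt_def)
  then have "countable ((\<lambda>S. Inf S) ` block_set ` \<beta>)"
    by blast
  moreover have "(\<lambda>S. Inf S) ` block_set ` \<beta> = fst ` \<beta>"
    using IH_block(2)[OF \<beta>] by (force simp: image_image block_set_def cInf_greaterThanLessThan)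
  ultimately show ?thesis
    using IH_inj_on_fst[OF \<beta>] countable_image_inj_on by metis
qed

section \<open>Correspondences and distortion\<close>

lemma sum_list_filter_split:
  fixes f :: "'a \<Rightarrow> 'b::comm_monoid_add"
  shows "(\<Sum>x\<leftarrow>xs. f x) = (\<Sum>x\<leftarrow>filter P xs. f x) + (\<Sum>x\<leftarrow>filter (\<lambda>x. \<not> P x) xs. f x)"
  by (induction xs) (simp_all add: add_ac)

lemma IH_sum_Leb_le:
  assumes \<beta>: "\<beta> \<in> IH" and "set us \<subseteq> \<beta>" and "sorted_wrt (\<lambda>U V. fst U < fst V) us"
    and "\<forall>U\<in>set us. x \<le> fst U \<and> snd U \<le> y" and "x \<le> y"
  shows "(\<Sum>U\<leftarrow>us. Leb U) \<le> y - x"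
  using assms(2-5)
proof (induction us arbitrary: x)
  case Nil
  then show ?case by simp
next
  case (Cons U us)
  then have U: "U \<in> \<beta>" by simp
  have "\<forall>V\<in>set us. snd U \<le> fst V \<and> snd V \<le> y"
    using Cons.prems IH_block_before[OF \<beta> U] by force
  then have "(\<Sum>V\<leftarrow>us. Leb V) \<le> y - snd U"
    using Cons.IH Cons.prems by simp
  then show ?case
    using Cons.prems by (simp add: Leb_def)
qed

lemma correspondence_Nil: "correspondence \<beta> \<gamma> []"
  by (simp add: correspondence_def)

lemma correspondence_filter: "correspondence \<beta> \<gamma> cs \<Longrightarrow> correspondence \<beta> \<gamma> (filter P cs)"
  by (auto simp: correspondence_def sorted_wrt_filter)

lemma correspondence_swap:
  "correspondence \<beta> \<gamma> cs \<Longrightarrow> correspondence \<gamma> \<beta> (map prod.swap cs)"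
  by (auto simp: correspondence_def sorted_wrt_map)

lemma correspondence_order_preserving:
  assumes cs: "correspondence \<beta> \<gamma> cs" and "p \<in> set cs" and "q \<in> set cs"
    and less: "fst (fst p) < fst (fst q)"
  shows "fst (snd p) < fst (snd q)"
proof -
  obtain i j where i: "i < length cs" "p = cs ! i" and j: "j < length cs" "q = cs ! j"
    using \<open>p \<in> set cs\<close> \<open>q \<in> set cs\<close> by (metis in_set_conv_nth)
  have "\<not> j \<le> i"
  proof
    assume "j \<le> i"
    then have "fst (fst q) \<le> fst (fst p)"
      using cs i j sorted_wrt_nth_less[of "\<lambda>p q. fst (fst p) < fst (fst q)" cs j i]
      by (cases "j = i") (auto simp: correspondence_def)
    with less show False by simp
  qed
  then show ?thesis
    using cs i j sorted_wrt_nth_less[of "\<lambda>p q. fst (snd p) < fst (snd q)" cs i j]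
    by (simp add: correspondence_def)
qed

lemma correspondence_sum_fst_le:
  assumes "\<beta> \<in> IH" and "correspondence \<beta> \<gamma> cs"
    and "\<forall>p\<in>set cs. x \<le> fst (fst p) \<and> snd (fst p) \<le> y" and "x \<le> y"
  shows "(\<Sum>p\<leftarrow>cs. Leb (fst p)) \<le> y - x"
  using IH_sum_Leb_le[of \<beta> "map fst cs" x y] assms
  by (auto simp: correspondence_def sorted_wrt_map o_def)

lemma correspondence_sum_snd_le:
  assumes "\<gamma> \<in> IH" and "correspondence \<beta> \<gamma> cs"
    and "\<forall>p\<in>set cs. x \<le> fst (snd p) \<and> snd (snd p) \<le> y" and "x \<le> y"
  shows "(\<Sum>p\<leftarrow>cs. Leb (snd p)) \<le> y - x"
  using correspondence_sum_fst_le[OF assms(1) correspondence_swap[OF assms(2)]] assms(3,4)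
  by (simp add: o_def)

lemma dis_H_swap: "dis_H \<gamma> \<beta> (map prod.swap cs) = dis_H \<beta> \<gamma> cs"
  by (simp add: dis_H_def Let_def o_def abs_minus_commute max.commute)

lemma dis_H_nonneg:
  assumes "\<beta> \<in> IH" and "correspondence \<beta> \<gamma> cs"
  shows "0 \<le> dis_H \<beta> \<gamma> cs"
proof -
  have "(\<Sum>p\<leftarrow>cs. Leb (fst p)) \<le> IP_norm \<beta> - 0"
    using assms IH_block[OF assms(1)] IH_norm_nonneg[OF assms(1)]
    by (intro correspondence_sum_fst_le) (auto simp: correspondence_def)
  moreover have "0 \<le> (\<Sum>p\<leftarrow>cs. \<bar>Leb (fst p) - Leb (snd p)\<bar>)"
    by (rule sum_list_nonneg) auto
  ultimately show ?thesis
    by (simp add: dis_H_def Let_def)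
qed

lemma dH'_le_dis_H:
  assumes "\<beta> \<in> IH" and "correspondence \<beta> \<gamma> cs"
  shows "dH' \<beta> \<gamma> \<le> dis_H \<beta> \<gamma> cs"
  unfolding dH'_def
  by (rule cInf_lower) (use assms dis_H_nonneg in \<open>auto simp: bdd_below_def\<close>)

lemma dH'_le_d_alpha:
  assumes "\<beta> \<in> IH"
  shows "dH' \<beta> \<gamma> \<le> d_alpha \<alpha> \<beta> \<gamma>"
  unfolding dH'_def d_alpha_def
proof (rule cInf_mono)
  show "{dis_alpha \<alpha> \<beta> \<gamma> cs |cs. correspondence \<beta> \<gamma> cs} \<noteq> {}"
    using correspondence_Nil by blast
  show "bdd_below {dis_H \<beta> \<gamma> cs |cs. correspondence \<beta> \<gamma> cs}"
    using assms dis_H_nonneg unfolding bdd_below_def by blast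
  show "\<exists>x\<in>{dis_H \<beta> \<gamma> cs |cs. correspondence \<beta> \<gamma> cs}. x \<le> y"
    if "y \<in> {dis_alpha \<alpha> \<beta> \<gamma> cs |cs. correspondence \<beta> \<gamma> cs}" for y
    using that unfolding dis_alpha_def by auto
qed

lemma Cset_le_block:
  assumes "x \<in> Cset \<beta>" and "U \<in> \<beta>" and "x < snd U"
  shows "x \<le> fst U"
  using assms by (force simp: Cset_iff block_set_def)

lemma correspondence_transfer_gap:
  assumes \<beta>: "\<beta> \<in> IH" and \<gamma>: "\<gamma> \<in> IH" and cs: "correspondence \<beta> \<gamma> cs"
    and x: "x \<in> Cset \<beta>"
  obtains y where "y \<in> Cset \<gamma>"
    and "\<And>p. p \<in> set cs \<Longrightarrow> snd (fst p) \<le> x \<Longrightarrow> snd (snd p) \<le> y"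
    and "\<And>q. q \<in> set cs \<Longrightarrow> x < snd (fst q) \<Longrightarrow> y \<le> fst (snd q)"
proof -
  have in_cs: "fst p \<in> \<beta>" "snd p \<in> \<gamma>" if "p \<in> set cs" for p
    using cs that by (auto simp: correspondence_def)
  define y where "y = Max (insert 0 ((\<lambda>p. snd (snd p)) ` {p \<in> set cs. snd (fst p) \<le> x}))"
  have y_cases: "y = 0 \<or> (\<exists>p\<in>set cs. snd (fst p) \<le> x \<and> y = snd (snd p))"
    using Max_in[of "insert 0 ((\<lambda>p. snd (snd p)) ` {p \<in> set cs. snd (fst p) \<le> x})"]
    unfolding y_def by auto
  have "y \<in> Cset \<gamma>"
    using y_cases IH_zero_in_Cset[OF \<gamma>] IH_block_ends_in_Cset(2)[OF \<gamma> in_cs(2)] by auto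
  moreover have "snd (snd p) \<le> y" if "p \<in> set cs" "snd (fst p) \<le> x" for p
    using that unfolding y_def by (intro Max_ge) auto
  moreover have "y \<le> fst (snd q)" if q: "q \<in> set cs" "x < snd (fst q)" for q
    using y_cases
  proof
    assume "\<exists>p\<in>set cs. snd (fst p) \<le> x \<and> y = snd (snd p)"
    then obtain p where p: "p \<in> set cs" "snd (fst p) \<le> x" "y = snd (snd p)"
      by blast
    have "fst (fst p) < fst (fst q)"
      using p(2) Cset_le_block[OF x in_cs(1)[OF q(1)] q(2)] IH_block(2)[OF \<beta> in_cs(1)[OF p(1)]]
      by linarith
    then have "fst (snd p) < fst (snd q)"
      by (rule correspondence_order_preserving[OF cs p(1) q(1)])
    then show ?thesis
      using IH_block_before[OF \<gamma> in_cs(2)[OF p(1)] in_cs(2)[OF q(1)]] p(3) by fastforce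
  qed (use IH_block(1)[OF \<gamma> in_cs(2)[OF q(1)]] in simp)
  ultimately show ?thesis
    using that by blast
qed

text \<open>Cutting the correspondence at a point \<open>x\<close> of \<open>Cset \<beta>\<close> and at the transferred point \<open>y\<close>
  of \<open>Cset \<gamma>\<close>, the matched blocks on either side fit into \<open>[0, x]\<close>, \<open>[x, \<parallel>\<beta>\<parallel>]\<close>,
  \<open>[0, y]\<close> and \<open>[y, \<parallel>\<gamma>\<parallel>]\<close>; comparing these lengths bounds \<open>\<bar>x - y\<bar>\<close>.\<close>
lemma Cset_near_point:
  assumes \<beta>: "\<beta> \<in> IH" and \<gamma>: "\<gamma> \<in> IH" and cs: "correspondence \<beta> \<gamma> cs"
    and x: "x \<in> Cset \<beta>"
  shows "\<exists>y\<in>Cset \<gamma>. \<bar>x - y\<bar> \<le> dis_H \<beta> \<gamma> cs"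
proof -
  obtain y where y: "y \<in> Cset \<gamma>"
    and left: "\<And>p. p \<in> set cs \<Longrightarrow> snd (fst p) \<le> x \<Longrightarrow> snd (snd p) \<le> y"
    and right: "\<And>q. q \<in> set cs \<Longrightarrow> x < snd (fst q) \<Longrightarrow> y \<le> fst (snd q)"
    using correspondence_transfer_gap[OF assms] by blast
  define P1 where "P1 = filter (\<lambda>p. snd (fst p) \<le> x) cs"
  define P2 where "P2 = filter (\<lambda>p. \<not> snd (fst p) \<le> x) cs"
  have cs1: "correspondence \<beta> \<gamma> P1" and cs2: "correspondence \<beta> \<gamma> P2"
    unfolding P1_def P2_def using cs by (simp_all add: correspondence_filter)
  have blocks: "fst p \<in> \<beta>" "snd p \<in> \<gamma>" if "p \<in> set cs" for p
    using cs that by (auto simp: correspondence_def)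
  have x_bounds: "0 \<le> x" "x \<le> IP_norm \<beta>" and y_bounds: "0 \<le> y" "y \<le> IP_norm \<gamma>"
    using x y by (auto simp: Cset_iff)
  define a1 a2 b1 b2 where
    "a1 = (\<Sum>p\<leftarrow>P1. Leb (fst p))" and "a2 = (\<Sum>p\<leftarrow>P2. Leb (fst p))" and
    "b1 = (\<Sum>p\<leftarrow>P1. Leb (snd p))" and "b2 = (\<Sum>p\<leftarrow>P2. Leb (snd p))"
  have "a1 \<le> x - 0"
    unfolding a1_def using x_bounds IH_block[OF \<beta> blocks(1)]
    by (intro correspondence_sum_fst_le[OF \<beta> cs1]) (auto simp: P1_def)
  moreover have "a2 \<le> IP_norm \<beta> - x"
    unfolding a2_def using x_bounds IH_block[OF \<beta> blocks(1)] Cset_le_block[OF x blocks(1)]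
    by (intro correspondence_sum_fst_le[OF \<beta> cs2]) (auto simp: P2_def)
  moreover have "b1 \<le> y - 0"
    unfolding b1_def using y_bounds IH_block[OF \<gamma> blocks(2)] left
    by (intro correspondence_sum_snd_le[OF \<gamma> cs1]) (auto simp: P1_def)
  moreover have "b2 \<le> IP_norm \<gamma> - y"
    unfolding b2_def using y_bounds IH_block[OF \<gamma> blocks(2)] right
    by (intro correspondence_sum_snd_le[OF \<gamma> cs2]) (auto simp: P2_def)
  moreover have "\<bar>a1 - b1\<bar> \<le> (\<Sum>p\<leftarrow>P1. \<bar>Leb (fst p) - Leb (snd p)\<bar>)"
    unfolding a1_def b1_def using sum_list_abs[of "map (\<lambda>p. Leb (fst p) - Leb (snd p)) P1"]
    by (simp add: sum_list_subtractf o_def)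
  moreover have "0 \<le> (\<Sum>p\<leftarrow>P2. \<bar>Leb (fst p) - Leb (snd p)\<bar>)"
    by (rule sum_list_nonneg) auto
  moreover have "(\<Sum>p\<leftarrow>cs. f p) = (\<Sum>p\<leftarrow>P1. f p) + (\<Sum>p\<leftarrow>P2. f p)" for f :: "_ \<Rightarrow> real"
    unfolding P1_def P2_def by (rule sum_list_filter_split)
  ultimately have "\<bar>x - y\<bar> \<le> dis_H \<beta> \<gamma> cs"
    unfolding dis_H_def Let_def a1_def a2_def b1_def b2_def by (simp add: abs_le_iff max_def)
  with y show ?thesis by blast
qed

lemma SUP_infdist_Cset_le_dis_H:
  assumes "\<beta> \<in> IH" and "\<gamma> \<in> IH" and "correspondence \<beta> \<gamma> cs"
  shows "(SUP x\<in>Cset \<beta>. infdist x (Cset \<gamma>)) \<le> dis_H \<beta> \<gamma> cs"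
proof (rule cSUP_least)
  show "Cset \<beta> \<noteq> {}"
    using IH_zero_in_Cset[OF assms(1)] by auto
  show "infdist x (Cset \<gamma>) \<le> dis_H \<beta> \<gamma> cs" if "x \<in> Cset \<beta>" for x
    using Cset_near_point[OF assms that] by (auto intro: infdist_le2 simp: dist_real_def)
qed

lemma dH_le_dis_H:
  assumes "\<beta> \<in> IH" and "\<gamma> \<in> IH" and "correspondence \<beta> \<gamma> cs"
  shows "dH \<beta> \<gamma> \<le> dis_H \<beta> \<gamma> cs"
  using SUP_infdist_Cset_le_dis_H[OF assms]
    SUP_infdist_Cset_le_dis_H[OF assms(2,1) correspondence_swap[OF assms(3)]]
  by (simp add: dH_def hausdorff_dist_def dis_H_swap)

lemma dH_le_dH':
  assumes "\<beta> \<in> IH" and "\<gamma> \<in> IH"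
  shows "dH \<beta> \<gamma> \<le> dH' \<beta> \<gamma>"
  unfolding dH'_def
  by (rule cInf_greatest) (use correspondence_Nil dH_le_dis_H[OF assms] in auto)

section \<open>Matching the long blocks of nearby partitions\<close>

lemma IH_emeasure_blocks_le:
  assumes "\<beta> \<in> IH" and "finite F" and "F \<subseteq> \<beta>"
  shows "emeasure lborel (\<Union>U\<in>F. block_set U) \<le> ennreal (\<Sum>U\<in>F. Leb U)"
proof -
  have "emeasure lborel (\<Union>U\<in>F. block_set U) \<le> (\<Sum>U\<in>F. emeasure lborel (block_set U))"
    by (rule emeasure_subadditive_finite[OF assms(2)]) (auto simp: block_set_def)
  also have "\<dots> = (\<Sum>U\<in>F. ennreal (Leb U))"
  proof (rule sum.cong)
    fix U assume "U \<in> F"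
    then have "fst U < snd U"
      using assms IH_block(2) by blast
    then show "emeasure lborel (block_set U) = ennreal (Leb U)"
      by (simp add: block_set_def Leb_def)
  qed simp
  also have "\<dots> = ennreal (\<Sum>U\<in>F. Leb U)"
    using assms(3) by (intro sum_ennreal less_imp_le IH_Leb_pos[OF assms(1)]) auto
  finally show ?thesis .
qed

lemma IH_norm_le_emeasure_blocks:
  assumes \<beta>: "\<beta> \<in> IH"
  shows "ennreal (IP_norm \<beta>) \<le> emeasure lborel (\<Union>U\<in>\<beta>. block_set U)"
proof -
  define X where "X = (\<Union>U\<in>\<beta>. block_set U)"
  have "open X"
    unfolding X_def by (intro open_Union) (auto simp: block_set_def)
  then have X: "X \<in> sets lborel"
    using borel_open by simp
  have null: "{0..IP_norm \<beta>} - X \<in> null_sets lborel"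
    using IH_is_IP_of[OF \<beta>] by (simp add: X_def is_IP_of_def)
  have "ennreal (IP_norm \<beta>) = emeasure lborel {0..IP_norm \<beta>}"
    using IH_norm_nonneg[OF \<beta>] by simp
  also have "\<dots> \<le> emeasure lborel (X \<union> ({0..IP_norm \<beta>} - X))"
    using X null by (intro emeasure_mono) auto
  also have "\<dots> = emeasure lborel X"
    by (rule emeasure_Un_null_set[OF X null])
  finally show ?thesis
    by (simp add: X_def)
qed

lemma IH_norm_le_SUP_finite_sums:
  assumes \<beta>: "\<beta> \<in> IH"
  shows "ennreal (IP_norm \<beta>) \<le> (SUP F\<in>{F. finite F \<and> F \<subseteq> \<beta>}. ennreal (\<Sum>U\<in>F. Leb U))"
    (is "_ \<le> ?S")
proof (cases "\<beta> = {}")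
  case True
  then show ?thesis
    using IH_norm_le_emeasure_blocks[OF \<beta>] by simp
next
  case False
  define f where "f = from_nat_into \<beta>"
  have range_f: "range f = \<beta>"
    using False IH_countable[OF \<beta>] by (simp add: f_def)
  define A where "A n = (\<Union>U\<in>f ` {..<n}. block_set U)" for n
  have "(\<Union>U\<in>\<beta>. block_set U) = (\<Union>n. A n)"
    unfolding A_def by (auto simp flip: range_f)
  then have "ennreal (IP_norm \<beta>) \<le> emeasure lborel (\<Union>n. A n)"
    using IH_norm_le_emeasure_blocks[OF \<beta>] by simp
  also have "\<dots> = (SUP n. emeasure lborel (A n))"
  proof (rule SUP_emeasure_incseq[symmetric])
    show "range A \<subseteq> sets lborel"
      unfolding A_def by (auto simp: block_set_def)
    show "incseq A"
      unfolding A_def by (rule monoI) (auto intro: less_le_trans)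
  qed
  also have "\<dots> \<le> ?S"
  proof (rule SUP_least)
    fix n
    have fin: "finite (f ` {..<n})" and sub: "f ` {..<n} \<subseteq> \<beta>"
      using range_f by auto
    then have "emeasure lborel (A n) \<le> ennreal (\<Sum>U\<in>f ` {..<n}. Leb U)"
      unfolding A_def by (rule IH_emeasure_blocks_le[OF \<beta>])
    also have "\<dots> \<le> ?S"
      using fin sub by (intro SUP_upper) auto
    finally show "emeasure lborel (A n) \<le> ?S" .
  qed
  finally show ?thesis .
qed

lemma IH_finite_blocks_approx_norm:
  assumes \<beta>: "\<beta> \<in> IH" and e: "0 < e"
  obtains F where "finite F" and "F \<subseteq> \<beta>" and "IP_norm \<beta> - e < (\<Sum>U\<in>F. Leb U)"
proof (cases "IP_norm \<beta> < e")
  case True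
  then show ?thesis using that[of "{}"] by simp
next
  case False
  then have "ennreal (IP_norm \<beta> - e) < ennreal (IP_norm \<beta>)"
    using e by (simp add: ennreal_less_iff)
  also have "\<dots> \<le> (SUP F\<in>{F. finite F \<and> F \<subseteq> \<beta>}. ennreal (\<Sum>U\<in>F. Leb U))"
    by (rule IH_norm_le_SUP_finite_sums[OF \<beta>])
  finally obtain F where "finite F" "F \<subseteq> \<beta>" "ennreal (IP_norm \<beta> - e) < ennreal (\<Sum>U\<in>F. Leb U)"
    by (auto simp: less_SUP_iff)
  moreover have "0 \<le> IP_norm \<beta> - e"
    using False by simp
  ultimately show ?thesis
    using that by (simp add: ennreal_less_iff)
qed

lemma IH_sorted_list_of_blocks:
  assumes \<beta>: "\<beta> \<in> IH" and F: "finite F" "F \<subseteq> \<beta>"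
  obtains us where "set us = F" and "distinct us" and "sorted_wrt (\<lambda>U V. fst U < fst V) us"
proof -
  obtain xs where xs: "set xs = F" "distinct xs"
    using finite_distinct_list[OF F(1)] by blast
  let ?us = "sort_key fst xs"
  have "inj_on fst (set ?us)"
    using inj_on_subset[OF IH_inj_on_fst[OF \<beta>] F(2)] xs by simp
  then have "distinct (map fst ?us)"
    using xs by (simp add: distinct_map)
  then have "sorted_wrt (<) (map fst ?us)"
    by (simp add: strict_sorted_iff)
  then show ?thesis
    using that[of ?us] xs by (simp add: sorted_wrt_map)
qed

lemma dH_less_imp_near:
  assumes \<beta>: "\<beta> \<in> IH" and \<gamma>: "\<gamma> \<in> IH" and less: "dH \<beta> \<gamma> < d" and x: "x \<in> Cset \<beta>"
  shows "\<exists>y\<in>Cset \<gamma>. \<bar>x - y\<bar> < d"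
proof -
  have "bdd_above ((\<lambda>x. infdist x (Cset \<gamma>)) ` Cset \<beta>)"
  proof (rule bdd_aboveI2)
    fix w assume "w \<in> Cset \<beta>"
    then show "infdist w (Cset \<gamma>) \<le> IP_norm \<beta>"
      using infdist_le[OF IH_zero_in_Cset[OF \<gamma>], of w] by (simp add: Cset_iff dist_real_def)
  qed
  then have "infdist x (Cset \<gamma>) \<le> dH \<beta> \<gamma>"
    using cSUP_upper[OF x] by (fastforce simp: dH_def hausdorff_dist_def)
  moreover have ne: "Cset \<gamma> \<noteq> {}"
    using IH_zero_in_Cset[OF \<gamma>] by blast
  ultimately have "(INF y\<in>Cset \<gamma>. dist x y) < d"
    using less by (simp add: infdist_notempty)
  moreover have "bdd_below (dist x ` Cset \<gamma>)"
    by (rule bdd_belowI[of _ 0]) auto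
  ultimately show ?thesis
    using ne by (auto simp: cINF_less_iff dist_real_def)
qed

lemma dH_sym: "dH \<beta> \<gamma> = dH \<gamma> \<beta>"
  unfolding dH_def hausdorff_dist_def by (simp add: max.commute)

lemma Cset_avoids_block_interior:
  assumes U: "U \<in> \<beta>" and near: "\<And>y. y \<in> Cset \<gamma> \<Longrightarrow> \<exists>x\<in>Cset \<beta>. \<bar>x - y\<bar> < d"
    and "fst U + d \<le> z" and "z \<le> snd U - d"
  shows "z \<notin> Cset \<gamma>"
proof
  assume "z \<in> Cset \<gamma>"
  then obtain x where "x \<in> Cset \<beta>" and "\<bar>x - z\<bar> < d"
    using near by blast
  moreover from this(2) have "x \<in> block_set U"
    using assms(3,4) by (auto simp: block_set_def abs_less_iff)
  ultimately show False
    using U by (simp add: Cset_iff)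
qed

text \<open>The midpoint of a long block \<open>U\<close> of \<open>\<beta>\<close> is far from \<open>Cset \<gamma>\<close>, hence lies in a block \<open>V\<close>
  of \<open>\<gamma>\<close>; the endpoints of \<open>V\<close> are close to \<open>Cset \<beta>\<close> and the endpoints of \<open>U\<close> are close to
  \<open>Cset \<gamma>\<close>, which pins them together.\<close>
lemma dH_less_imp_matching_block:
  assumes \<beta>: "\<beta> \<in> IH" and \<gamma>: "\<gamma> \<in> IH" and U: "U \<in> \<beta>"
    and long: "2 * d < Leb U" and less: "dH \<beta> \<gamma> < d"
  shows "\<exists>V\<in>\<gamma>. \<bar>fst V - fst U\<bar> < d \<and> \<bar>snd V - snd U\<bar> < d"
proof -
  have near\<gamma>: "\<exists>y\<in>Cset \<gamma>. \<bar>x - y\<bar> < d" if "x \<in> Cset \<beta>" for x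
    using dH_less_imp_near[OF \<beta> \<gamma> less that] .
  have near\<beta>: "\<exists>x\<in>Cset \<beta>. \<bar>x - y\<bar> < d" if "y \<in> Cset \<gamma>" for y
    using dH_less_imp_near[OF \<gamma> \<beta> _ that] less by (metis dH_sym abs_minus_commute)
  note interior_free = Cset_avoids_block_interior[where \<gamma> = \<gamma> and d = d, OF U near\<beta>]
  define m where "m = (fst U + snd U) / 2"
  have m: "fst U + d < m" "m < snd U - d"
    using long by (simp_all add: m_def Leb_def field_simps)
  obtain z where "z \<in> Cset \<gamma>" "\<bar>IP_norm \<beta> - z\<bar> < d"
    using near\<gamma>[OF IH_norm_in_Cset[OF \<beta>]] by blast
  then have "m \<le> IP_norm \<gamma>"
    using IH_block(3)[OF \<beta> U] m by (auto simp: Cset_iff abs_less_iff)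
  moreover have "0 \<le> m"
    using IH_block(1,2)[OF \<beta> U] by (simp add: m_def)
  ultimately obtain V where V: "V \<in> \<gamma>" "fst V < m" "m < snd V"
    using interior_free[where z = m] m by (auto simp: Cset_iff block_set_def)
  have V_ends: "fst V \<in> Cset \<gamma>" "snd V \<in> Cset \<gamma>"
    using IH_block_ends_in_Cset[OF \<gamma> V(1)] by auto
  have inside_V: "y \<notin> Cset \<gamma>" if "fst V < y" "y < snd V" for y
    using V(1) that by (auto simp: Cset_iff block_set_def)
  have "fst V < fst U + d"
    using interior_free[where z = "fst V"] V_ends(1) V(2) m by force
  moreover have "snd U - d < snd V"
    using interior_free[where z = "snd V"] V_ends(2) V(3) m by force
  moreover have "fst U - d < fst V"
  proof (rule ccontr)
    assume "\<not> fst U - d < fst V"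
    moreover obtain y where "y \<in> Cset \<gamma>" "\<bar>fst U - y\<bar> < d"
      using near\<gamma>[OF IH_block_ends_in_Cset(1)[OF \<beta> U]] by blast
    ultimately show False
      using inside_V V(3) m by (auto simp: abs_less_iff)
  qed
  moreover have "snd V < snd U + d"
  proof (rule ccontr)
    assume "\<not> snd V < snd U + d"
    moreover obtain y where "y \<in> Cset \<gamma>" "\<bar>snd U - y\<bar> < d"
      using near\<gamma>[OF IH_block_ends_in_Cset(2)[OF \<beta> U]] by blast
    ultimately show False
      using inside_V V(2) m by (auto simp: abs_less_iff)
  qed
  ultimately have "\<bar>fst V - fst U\<bar> < d \<and> \<bar>snd V - snd U\<bar> < d"
    by (simp add: abs_less_iff)
  with V(1) show ?thesis
    by blast
qed

lemma correspondence_of_monotone_matching: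
  assumes \<beta>: "\<beta> \<in> IH" and F: "finite F" "F \<subseteq> \<beta>" and m: "m ` F \<subseteq> \<gamma>"
    and mono: "\<And>U V. U \<in> F \<Longrightarrow> V \<in> F \<Longrightarrow> fst U < fst V \<Longrightarrow> fst (m U) < fst (m V)"
  obtains us where "set us = F" and "distinct us" and "correspondence \<beta> \<gamma> (map (\<lambda>U. (U, m U)) us)"
proof -
  obtain us where us: "set us = F" "distinct us" and sorted: "sorted_wrt (\<lambda>U V. fst U < fst V) us"
    using IH_sorted_list_of_blocks[OF \<beta> F] by blast
  have "sorted_wrt (\<lambda>U V. fst (m U) < fst (m V)) us"
    by (rule sorted_wrt_mono_rel[OF _ sorted]) (use mono us(1) in auto)
  with sorted us F m have "correspondence \<beta> \<gamma> (map (\<lambda>U. (U, m U)) us)"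
    by (auto simp: correspondence_def sorted_wrt_map)
  with us show ?thesis
    using that by blast
qed

lemma dH_less_imp_close_correspondence:
  assumes \<beta>: "\<beta> \<in> IH" and \<gamma>: "\<gamma> \<in> IH" and F: "finite F" "F \<subseteq> \<beta>"
    and long: "\<And>U. U \<in> F \<Longrightarrow> 2 * d < Leb U" and less: "dH \<beta> \<gamma> < d"
  obtains us m where "set us = F" and "distinct us"
    and "correspondence \<beta> \<gamma> (map (\<lambda>U. (U, m U)) us)"
    and "\<forall>U\<in>F. \<bar>Leb U - Leb (m U)\<bar> \<le> 2 * d"
proof -
  obtain m where m: "\<And>U. U \<in> F \<Longrightarrow> m U \<in> \<gamma>"
    and close: "\<And>U. U \<in> F \<Longrightarrow> \<bar>fst (m U) - fst U\<bar> < d \<and> \<bar>snd (m U) - snd U\<bar> < d"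
    using dH_less_imp_matching_block[OF \<beta> \<gamma> _ long less] F(2) by (metis subsetD)
  have mono: "fst (m U) < fst (m V)" if "U \<in> F" "V \<in> F" "fst U < fst V" for U V
  proof -
    have "snd U \<le> fst V"
      using IH_block_before[of \<beta> U V] that \<beta> F(2) by force
    then show ?thesis
      using close[OF that(1)] close[OF that(2)] long[OF that(1)] by (simp add: Leb_def abs_less_iff)
  qed
  have "m ` F \<subseteq> \<gamma>"
    using m by auto
  then obtain us where "set us = F" "distinct us" "correspondence \<beta> \<gamma> (map (\<lambda>U. (U, m U)) us)"
    by (rule correspondence_of_monotone_matching[OF \<beta> F _ mono])
  moreover have "\<forall>U\<in>F. \<bar>Leb U - Leb (m U)\<bar> \<le> 2 * d"
    using close unfolding Leb_def abs_less_iff abs_le_iff by fastforce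
  ultimately show ?thesis
    by (rule that)
qed

lemma dH'_le_if_dH_less:
  assumes \<beta>: "\<beta> \<in> IH" and \<gamma>: "\<gamma> \<in> IH" and F: "finite F" "F \<subseteq> \<beta>"
    and long: "\<And>U. U \<in> F \<Longrightarrow> 2 * d < Leb U" and less: "dH \<beta> \<gamma> < d"
  shows "dH' \<beta> \<gamma> \<le> IP_norm \<beta> - (\<Sum>U\<in>F. Leb U) + (4 * real (card F) + 1) * d"
proof -
  obtain us m where us: "set us = F" "distinct us"
    and cs: "correspondence \<beta> \<gamma> (map (\<lambda>U. (U, m U)) us)"
    and close: "\<forall>U\<in>F. \<bar>Leb U - Leb (m U)\<bar> \<le> 2 * d"
    by (rule dH_less_imp_close_correspondence[OF assms])
  define S where "S = (\<Sum>U\<leftarrow>us. \<bar>Leb U - Leb (m U)\<bar>)"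
  define nd where "nd = real (card F) * d"
  have sum_F: "(\<Sum>U\<leftarrow>us. Leb U) = (\<Sum>U\<in>F. Leb U)"
    using us by (simp add: sum_list_distinct_conv_sum_set)
  have "S \<le> (\<Sum>U\<leftarrow>us. 2 * d)"
    unfolding S_def using close us(1) by (intro sum_list_mono) auto
  also have "\<dots> = 2 * nd"
    using us by (simp add: sum_list_triv distinct_card[symmetric] nd_def)
  finally have S: "S \<le> 2 * nd" .
  have "(\<Sum>U\<leftarrow>us. Leb U) - (\<Sum>U\<leftarrow>us. Leb (m U)) \<le> S"
    unfolding S_def using sum_list_abs[of "map (\<lambda>U. Leb U - Leb (m U)) us"]
    by (simp add: sum_list_subtractf o_def)
  moreover obtain x where "x \<in> Cset \<beta>" and x: "\<bar>IP_norm \<gamma> - x\<bar> < d"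
    using dH_less_imp_near[OF \<gamma> \<beta> _ IH_norm_in_Cset[OF \<gamma>]] less by (metis dH_sym)
  then have "IP_norm \<gamma> < IP_norm \<beta> + d"
    by (auto simp: Cset_iff abs_less_iff)
  moreover have "0 < d"
    using x by linarith
  moreover from this have "0 \<le> nd"
    by (simp add: nd_def)
  ultimately have "S + IP_norm \<beta> - (\<Sum>U\<leftarrow>us. Leb U) \<le> IP_norm \<beta> - (\<Sum>U\<in>F. Leb U) + 4 * nd + d"
    "S + IP_norm \<gamma> - (\<Sum>U\<leftarrow>us. Leb (m U)) \<le> IP_norm \<beta> - (\<Sum>U\<in>F. Leb U) + 4 * nd + d"
    using S sum_F by linarith+
  then have "dis_H \<beta> \<gamma> (map (\<lambda>U. (U, m U)) us) \<le> IP_norm \<beta> - (\<Sum>U\<in>F. Leb U) + 4 * nd + d"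
    by (simp add: dis_H_def Let_def S_def o_def)
  then show ?thesis
    using dH'_le_dis_H[OF \<beta> cs] by (simp add: nd_def algebra_simps)
qed

lemma dH'_small_if_dH_small:
  assumes \<beta>: "\<beta> \<in> IH" and e: "0 < e"
  shows "\<exists>\<delta>>0. \<forall>\<gamma>\<in>IH. dH \<beta> \<gamma> < \<delta> \<longrightarrow> dH' \<beta> \<gamma> < e"
proof -
  obtain F where F: "finite F" "F \<subseteq> \<beta>" and approx: "IP_norm \<beta> - e / 2 < (\<Sum>U\<in>F. Leb U)"
    using IH_finite_blocks_approx_norm[OF \<beta>, of "e / 2"] e by auto
  define n where "n = 4 * real (card F) + 1"
  define \<delta> where "\<delta> = min (e / (2 * n)) (Min (insert 1 (Leb ` F)) / 3)"
  have n: "1 \<le> n"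
    by (simp add: n_def)
  have "0 < Min (insert 1 (Leb ` F))"
    using F IH_Leb_pos[OF \<beta>] by auto
  then have \<delta>: "0 < \<delta>"
    using e n by (simp add: \<delta>_def)
  have long: "2 * \<delta> < Leb U" if "U \<in> F" for U
  proof -
    have "Min (insert 1 (Leb ` F)) \<le> Leb U"
      using F(1) that by (intro Min_le) auto
    then show ?thesis
      using \<open>0 < Min (insert 1 (Leb ` F))\<close> unfolding \<delta>_def by linarith
  qed
  have "n * \<delta> \<le> n * (e / (2 * n))"
    using n by (intro mult_left_mono) (auto simp: \<delta>_def)
  then have small: "n * \<delta> \<le> e / 2"
    using n by simp
  have "dH' \<beta> \<gamma> < e" if "\<gamma> \<in> IH" "dH \<beta> \<gamma> < \<delta>" for \<gamma>
    using dH'_le_if_dH_less[OF \<beta> that(1) F long that(2)] approx small by (simp add: n_def)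
  with \<delta> show ?thesis
    by blast
qed

lemma metric_open_if_locally_controlled:
  assumes control: "\<And>x e. x \<in> X \<Longrightarrow> 0 < e \<Longrightarrow> \<exists>\<delta>>0. \<forall>y\<in>X. d1 x y < \<delta> \<longrightarrow> d2 x y < e"
    and S: "metric_open X d2 S"
  shows "metric_open X d1 S"
  unfolding metric_open_def
proof (intro conjI ballI)
  show "S \<subseteq> X"
    using S by (simp add: metric_open_def)
  fix x assume "x \<in> S"
  then obtain e where "0 < e" and e: "\<forall>y\<in>X. d2 x y < e \<longrightarrow> y \<in> S"
    using S by (auto simp: metric_open_def)
  moreover have "x \<in> X"
    using S \<open>x \<in> S\<close> by (auto simp: metric_open_def)
  ultimately obtain \<delta> where "0 < \<delta>" and "\<forall>y\<in>X. d1 x y < \<delta> \<longrightarrow> d2 x y < e"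
    using control by blast
  with e show "\<exists>\<delta>>0. \<forall>y\<in>X. d1 x y < \<delta> \<longrightarrow> y \<in> S"
    by blast
qed

lemma metric_open_dH_iff_dH':
  "metric_open IH dH S \<longleftrightarrow> metric_open IH dH' S"
proof
  assume "metric_open IH dH S"
  then show "metric_open IH dH' S"
    by (rule metric_open_if_locally_controlled[rotated]) (use dH_le_dH' in force)
next
  assume "metric_open IH dH' S"
  then show "metric_open IH dH S"
    by (rule metric_open_if_locally_controlled[rotated]) (rule dH'_small_if_dH_small)
qed

section \<open>Partitions with prescribed total diversity\<close>

definition partial_sum_blocks :: "(nat \<Rightarrow> real) \<Rightarrow> block set" where
  "partial_sum_blocks f = range (\<lambda>n. (\<Sum>i<n. f i, \<Sum>i<Suc n. f i))"

lemma partial_sum_blocks_cover: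
  fixes f :: "nat \<Rightarrow> real"
  assumes pos: "\<And>n. 0 < f n" and summ: "summable f"
  shows "{0..suminf f} - (\<Union>U\<in>partial_sum_blocks f. block_set U)
           \<subseteq> range (\<lambda>n. \<Sum>i<n. f i) \<union> {suminf f}"
proof
  define s where "s n = (\<Sum>i<n. f i)" for n
  fix x assume x: "x \<in> {0..suminf f} - (\<Union>U\<in>partial_sum_blocks f. block_set U)"
  show "x \<in> range (\<lambda>n. \<Sum>i<n. f i) \<union> {suminf f}"
  proof (rule ccontr)
    assume "x \<notin> range (\<lambda>n. \<Sum>i<n. f i) \<union> {suminf f}"
    then have "x < suminf f" and x_ne: "\<And>n. x \<noteq> s n"
      using x by (auto simp: s_def)
    then have "\<forall>\<^sub>F n in sequentially. x < s n"
      using order_tendstoD(1)[OF summable_LIMSEQ[OF summ]] by (simp add: s_def)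
    then have "\<exists>n. x < s n"
      by (auto simp: eventually_sequentially)
    define k where "k = (LEAST n. x < s n)"
    have "x < s k"
      unfolding k_def by (rule LeastI_ex) fact
    moreover have "k \<noteq> 0"
    proof
      assume "k = 0"
      with \<open>x < s k\<close> x show False
        by (simp add: s_def)
    qed
    moreover have "s (k - 1) < x"
      using not_less_Least[of "k - 1" "\<lambda>n. x < s n"] x_ne[of "k - 1"] \<open>k \<noteq> 0\<close>
      by (fastforce simp: k_def)
    ultimately have "x \<in> block_set (s (k - 1), s (Suc (k - 1)))"
      by (simp add: block_set_def)
    then show False
      using x by (auto simp: partial_sum_blocks_def s_def)
  qed
qed

lemma is_IP_of_partial_sum_blocks:
  assumes pos: "\<And>n. 0 < f n" and summ: "summable f"
  shows "is_IP_of (suminf f) (partial_sum_blocks f)"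
proof -
  define s where "s n = (\<Sum>i<n. f i)" for n
  define L where "L = suminf f"
  have B: "partial_sum_blocks f = range (\<lambda>n. (s n, s (Suc n)))"
    by (simp add: partial_sum_blocks_def s_def)
  have s_mono: "strict_mono s"
    using pos by (intro strict_monoI_Suc) (simp add: s_def)
  have s_nonneg: "0 \<le> s n" for n
    using pos by (simp add: s_def sum_nonneg less_imp_le)
  have s_le: "s n \<le> L" for n
    unfolding s_def L_def using pos by (intro sum_le_suminf[OF summ]) (auto intro: less_imp_le)
  have "open (\<Union>U\<in>partial_sum_blocks f. block_set U)"
    by (intro open_Union) (auto simp: block_set_def)
  then have "{0..L} - (\<Union>U\<in>partial_sum_blocks f. block_set U) \<in> sets lborel"
    using borel_open by simp
  then have null: "{0..L} - (\<Union>U\<in>partial_sum_blocks f. block_set U) \<in> null_sets lborel"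
    using null_sets_subset[OF countable_imp_null_set_lborel _ partial_sum_blocks_cover[OF pos summ]]
    by (simp add: L_def)
  have disjoint: "block_set (s m, s (Suc m)) \<inter> block_set (s n, s (Suc n)) = {}" if "m < n" for m n
    using strict_mono_less_eq[OF s_mono, of "Suc m" n] that by (auto simp: block_set_def)
  show ?thesis
    unfolding is_IP_of_def L_def[symmetric]
  proof (intro conjI ballI impI null)
    show "0 \<le> L"
      using s_le[of 0] s_nonneg[of 0] by linarith
    show "0 \<le> fst U" "fst U < snd U" "snd U \<le> L" if "U \<in> partial_sum_blocks f" for U
      using that s_nonneg s_le s_mono by (auto simp: B strict_mono_def)
    show "block_set U \<inter> block_set V = {}"
      if U: "U \<in> partial_sum_blocks f" and V: "V \<in> partial_sum_blocks f" and "U \<noteq> V" for U V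
    proof -
      obtain m n where UV: "U = (s m, s (Suc m))" "V = (s n, s (Suc n))"
        using U V by (auto simp: B)
      with \<open>U \<noteq> V\<close> have "m \<noteq> n"
        by blast
      with UV show ?thesis
        using disjoint[of m n] disjoint[of n m] by (cases "m < n") (auto simp: Int_commute)
    qed
  qed
qed

lemma inj_partial_sum_blocks:
  fixes f :: "nat \<Rightarrow> real"
  assumes "\<And>n. 0 < f n"
  shows "inj (\<lambda>n. (\<Sum>i<n. f i, \<Sum>i<Suc n. f i))"
proof -
  have "strict_mono (\<lambda>n. \<Sum>i<n. f i)"
    using assms by (intro strict_monoI_Suc) simp
  then show ?thesis
    by (auto intro!: injI dest: strict_mono_eq)
qed

lemma div_count_partial_sum_blocks_bounded:
  assumes "summable f" and "t < suminf f"
  obtains M where "\<And>h. div_count (partial_sum_blocks f) t h \<le> real M"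
proof -
  obtain M where M: "\<And>n. n \<ge> M \<Longrightarrow> t < (\<Sum>i<n. f i)"
    using order_tendstoD(1)[OF summable_LIMSEQ[OF assms(1)] assms(2)]
    by (auto simp: eventually_sequentially)
  let ?blk = "\<lambda>n. (\<Sum>i<n. f i, \<Sum>i<Suc n. f i)"
  have sub: "{U \<in> partial_sum_blocks f. h < Leb U \<and> snd U \<le> t} \<subseteq> ?blk ` {..<M}" for h
  proof
    fix U assume "U \<in> {U \<in> partial_sum_blocks f. h < Leb U \<and> snd U \<le> t}"
    then obtain n where "U = (\<Sum>i<n. f i, \<Sum>i<Suc n. f i)" and "(\<Sum>i<Suc n. f i) \<le> t"
      by (auto simp: partial_sum_blocks_def)
    moreover from this(2) have "\<not> M \<le> Suc n"
      using M[of "Suc n"] by linarith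
    then have "n < M"
      by simp
    ultimately show "U \<in> ?blk ` {..<M}"
      by simp
  qed
  have "card {U \<in> partial_sum_blocks f. h < Leb U \<and> snd U \<le> t} \<le> M" for h
  proof -
    have "card {U \<in> partial_sum_blocks f. h < Leb U \<and> snd U \<le> t} \<le> card (?blk ` {..<M})"
      by (rule card_mono[OF _ sub]) simp
    also have "\<dots> \<le> M"
      using card_image_le[of "{..<M}" ?blk] by simp
    finally show ?thesis .
  qed
  then have "div_count (partial_sum_blocks f) t h \<le> real M" for h
    by (simp add: div_count_def)
  then show ?thesis
    by (rule that)
qed

lemma div_count_partial_sum_blocks_total:
  assumes pos: "\<And>n. 0 < f n" and summ: "summable f"
  shows "div_count (partial_sum_blocks f) (suminf f) h = real (card {n. h < f n})"
proof -
  let ?blk = "\<lambda>n. (\<Sum>i<n. f i, \<Sum>i<Suc n. f i)"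
  have "(\<Sum>i<Suc n. f i) \<le> suminf f" for n
    using pos by (intro sum_le_suminf[OF summ]) (auto intro: less_imp_le)
  then have "{U \<in> partial_sum_blocks f. h < Leb U \<and> snd U \<le> suminf f} = ?blk ` {n. h < f n}"
    by (auto simp: partial_sum_blocks_def Leb_def)
  moreover have "inj_on ?blk {n. h < f n}"
    using inj_partial_sum_blocks[of f, OF pos] by (rule inj_on_subset) simp
  ultimately show ?thesis
    by (simp only: div_count_def card_image)
qed

lemma tendsto_powr_at_right_0: "0 < a \<Longrightarrow> ((\<lambda>h::real. h powr a) \<longlongrightarrow> 0) (at_right 0)"
  by (rule tendsto_zero_powrI[OF tendsto_ident_at tendsto_const])
     (auto simp: eventually_at_right_less eventually_at_filter)

lemma partial_sum_blocks_in_IA: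
  assumes \<alpha>: "0 < \<alpha>" and pos: "\<And>n. 0 < f n" and summ: "summable f"
    and lim: "((\<lambda>h. h powr \<alpha> * real (card {n. h < f n})) \<longlongrightarrow> l) (at_right 0)"
  shows "partial_sum_blocks f \<in> IA \<alpha>" and "Div_inf \<alpha> (partial_sum_blocks f) = Gamma (1 - \<alpha>) * l"
proof -
  let ?\<beta> = "partial_sum_blocks f"
  have norm: "IP_norm ?\<beta> = suminf f"
    by (rule IP_norm_eq[OF is_IP_of_partial_sum_blocks[OF pos summ]])
  have lim_total: "((\<lambda>h. h powr \<alpha> * div_count ?\<beta> (suminf f) h) \<longlongrightarrow> l) (at_right 0)"
    using lim by (simp add: div_count_partial_sum_blocks_total[OF pos summ])
  have lim_below: "((\<lambda>h. h powr \<alpha> * div_count ?\<beta> t h) \<longlongrightarrow> 0) (at_right 0)" if t: "t < suminf f" for t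
  proof -
    obtain M where M: "\<And>h. div_count ?\<beta> t h \<le> real M"
      using div_count_partial_sum_blocks_bounded[OF summ t] by blast
    have lim_M: "((\<lambda>h. h powr \<alpha> * real M) \<longlongrightarrow> 0) (at_right 0)"
      using tendsto_mult[OF tendsto_powr_at_right_0[OF \<alpha>] tendsto_const, of "real M"] by simp
    show ?thesis
    proof (rule tendsto_sandwich[of "\<lambda>_. 0" _ _ "\<lambda>h. h powr \<alpha> * real M"])
      show "\<forall>\<^sub>F h in at_right 0. 0 \<le> h powr \<alpha> * div_count ?\<beta> t h"
        by (simp add: div_count_def)
      show "\<forall>\<^sub>F h in at_right 0. h powr \<alpha> * div_count ?\<beta> t h \<le> h powr \<alpha> * real M"
        using M by (intro always_eventually allI mult_left_mono) simp_all
    qed (simp_all add: lim_M)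
  qed
  have "?\<beta> \<in> IH"
    using is_IP_of_partial_sum_blocks[OF pos summ] by (auto simp: IH_def)
  moreover have "\<exists>l. ((\<lambda>h. h powr \<alpha> * div_count ?\<beta> t h) \<longlongrightarrow> l) (at_right 0)"
    if "t \<in> {0..IP_norm ?\<beta>}" for t
  proof (cases "t < suminf f")
    case True
    then show ?thesis using lim_below by blast
  next
    case False
    with that have "t = suminf f"
      by (simp add: norm)
    then show ?thesis using lim_total by blast
  qed
  ultimately show "?\<beta> \<in> IA \<alpha>"
    by (simp add: IA_def)
  show "Div_inf \<alpha> ?\<beta> = Gamma (1 - \<alpha>) * l"
    using tendsto_Lim[OF trivial_limit_at_right_real lim_total] by (simp add: Div_inf_def Div_def norm)
qed

lemma card_nat_less_real: "card {n::nat. real n < X} = nat \<lceil>X\<rceil>"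
proof -
  have "{n::nat. real n < X} = {..<nat \<lceil>X\<rceil>}"
    by (auto simp: zless_nat_eq_int_zless less_ceiling_iff)
  then show ?thesis
    by simp
qed

lemma less_powr_inverse_iff:
  fixes a h x :: real
  assumes "0 < a" and "0 < h" and "0 < x"
  shows "h < x powr (1 / a) \<longleftrightarrow> h powr a < x"
proof -
  have "h = (h powr a) powr (1 / a)"
    using assms by (simp add: powr_powr)
  then have "h < x powr (1 / a) \<longleftrightarrow> (h powr a) powr (1 / a) < x powr (1 / a)"
    by simp
  also have "\<dots> \<longleftrightarrow> h powr a < x"
  proof
    assume "(h powr a) powr (1 / a) < x powr (1 / a)"
    then show "h powr a < x"
      using assms powr_less_cancel2[of "1 / a" "h powr a" x] by simp
  next
    assume "h powr a < x"
    then show "(h powr a) powr (1 / a) < x powr (1 / a)"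
      using assms powr_less_mono2[of "1 / a" "h powr a" x] by simp
  qed
  finally show ?thesis .
qed

text \<open>The blocks \<open>(c / (n + N + 1)) powr (1 / \<alpha>)\<close> longer than \<open>h\<close> are those with
  \<open>n < c / h powr \<alpha> - (N + 1)\<close>, so their number is \<open>c / h powr \<alpha> + O(1)\<close>.\<close>
lemma tendsto_count_long_power_blocks:
  assumes \<alpha>: "0 < \<alpha>" and c: "0 < c"
  shows "((\<lambda>h. h powr \<alpha> * real (card {n. h < (c / real (n + N + 1)) powr (1 / \<alpha>)})) \<longlongrightarrow> c)
           (at_right 0)"
proof (rule tendsto_sandwich)
  define K where "K h = nat \<lceil>c / h powr \<alpha> - real (N + 1)\<rceil>" for h
  have count: "card {n. h < (c / real (n + N + 1)) powr (1 / \<alpha>)} = K h" if "0 < h" for h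
  proof -
    have "h < (c / real (n + N + 1)) powr (1 / \<alpha>) \<longleftrightarrow> real n < c / h powr \<alpha> - real (N + 1)" for n
      using that \<alpha> c by (simp add: less_powr_inverse_iff field_simps)
    then show ?thesis
      by (simp add: K_def card_nat_less_real)
  qed
  have scale: "h powr \<alpha> * (c / h powr \<alpha> - real (N + 1)) = c - real (N + 1) * h powr \<alpha>" if "0 < h" for h
    using that by (simp add: field_simps)
  show "\<forall>\<^sub>F h in at_right 0.
          c - real (N + 1) * h powr \<alpha> \<le> h powr \<alpha> * real (card {n. h < (c / real (n + N + 1)) powr (1 / \<alpha>)})"
  proof (rule eventually_mono[OF eventually_at_right_less])
    fix h :: real assume "0 < h"
    have "c / h powr \<alpha> - real (N + 1) \<le> real (K h)"
      unfolding K_def by linarith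
    then show "c - real (N + 1) * h powr \<alpha> \<le> h powr \<alpha> * real (card {n. h < (c / real (n + N + 1)) powr (1 / \<alpha>)})"
      using scale[OF \<open>0 < h\<close>] count[OF \<open>0 < h\<close>] by (metis mult_left_mono powr_ge_zero)
  qed
  show "\<forall>\<^sub>F h in at_right 0.
          h powr \<alpha> * real (card {n. h < (c / real (n + N + 1)) powr (1 / \<alpha>)}) \<le> c + h powr \<alpha>"
  proof (rule eventually_mono[OF eventually_at_right_less])
    fix h :: real assume "0 < h"
    have "real (K h) \<le> c / h powr \<alpha> + 1"
      using c unfolding K_def by (cases "c / h powr \<alpha> - real (N + 1) \<le> 0") (simp_all, linarith)
    then have "h powr \<alpha> * real (K h) \<le> h powr \<alpha> * (c / h powr \<alpha> + 1)"
      by (simp add: mult_left_mono)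
    also have "\<dots> = c + h powr \<alpha>"
      using \<open>0 < h\<close> by (simp add: distrib_left)
    finally show "h powr \<alpha> * real (card {n. h < (c / real (n + N + 1)) powr (1 / \<alpha>)}) \<le> c + h powr \<alpha>"
      using count[OF \<open>0 < h\<close>] by simp
  qed
  show "((\<lambda>h. c - real (N + 1) * h powr \<alpha>) \<longlongrightarrow> c) (at_right 0)"
    using tendsto_diff[OF tendsto_const tendsto_mult[OF tendsto_const tendsto_powr_at_right_0[OF \<alpha>]],
        of c "real (N + 1)"] by simp
  show "((\<lambda>h. c + h powr \<alpha>) \<longlongrightarrow> c) (at_right 0)"
    using tendsto_add[OF tendsto_const tendsto_powr_at_right_0[OF \<alpha>], of c] by simp
qed

lemma exists_IA_small_norm_given_Div_inf:
  assumes \<alpha>: "0 < \<alpha>" "\<alpha> < 1" and c: "0 < c" and \<epsilon>: "0 < \<epsilon>"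
  obtains \<beta> where "\<beta> \<in> IA \<alpha>" and "IP_norm \<beta> < \<epsilon>" and "Div_inf \<alpha> \<beta> = Gamma (1 - \<alpha>) * c"
proof -
  define g where "g n = (c / real (n + 1)) powr (1 / \<alpha>)" for n
  have "summable (\<lambda>n. real n powr (- (1 / \<alpha>)))"
    using \<alpha> by (simp add: summable_real_powr_iff)
  then have "summable (\<lambda>n. real (n + 1) powr (- (1 / \<alpha>)))"
    using summable_ignore_initial_segment[of _ 1] by blast
  moreover have "g = (\<lambda>n. c powr (1 / \<alpha>) * real (n + 1) powr (- (1 / \<alpha>)))"
    using c by (simp add: fun_eq_iff g_def powr_divide powr_minus_divide)
  ultimately have summ_g: "summable g"
    using summable_mult by simp
  obtain N where N: "norm (\<Sum>n. g (n + N)) < \<epsilon>"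
    using suminf_exist_split[OF \<epsilon> summ_g] by blast
  define f where "f n = (c / real (n + N + 1)) powr (1 / \<alpha>)" for n
  have f_g: "f = (\<lambda>n. g (n + N))"
    by (simp add: fun_eq_iff f_def g_def add_ac)
  have pos: "0 < f n" for n
    using c by (simp add: f_def)
  have summ: "summable f"
    unfolding f_g by (rule summable_ignore_initial_segment[OF summ_g])
  have lim: "((\<lambda>h. h powr \<alpha> * real (card {n. h < f n})) \<longlongrightarrow> c) (at_right 0)"
    unfolding f_def by (rule tendsto_count_long_power_blocks[OF \<alpha>(1) c])
  show ?thesis
  proof (rule that)
    show "partial_sum_blocks f \<in> IA \<alpha>" "Div_inf \<alpha> (partial_sum_blocks f) = Gamma (1 - \<alpha>) * c"
      using partial_sum_blocks_in_IA[OF \<alpha>(1) pos summ lim] by auto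
    have "IP_norm (partial_sum_blocks f) = suminf f"
      by (rule IP_norm_eq[OF is_IP_of_partial_sum_blocks[OF pos summ]])
    also have "\<dots> < \<epsilon>"
      using N pos suminf_nonneg[OF summ] by (simp add: f_g less_imp_le)
    finally show "IP_norm (partial_sum_blocks f) < \<epsilon>" .
  qed
qed

lemma is_IP_of_empty: "is_IP_of 0 {}"
  by (simp add: is_IP_of_def countable_imp_null_set_lborel)

lemma empty_in_IA: "{} \<in> IA \<alpha>"
  using is_IP_of_empty by (auto simp: IA_def IH_def div_count_def)

lemma Div_inf_empty: "Div_inf \<alpha> {} = 0"
  by (simp add: Div_inf_def Div_def div_count_def tendsto_Lim[OF trivial_limit_at_right_real tendsto_const])

lemma dH_empty_le:
  assumes \<beta>: "\<beta> \<in> IH"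
  shows "dH \<beta> {} \<le> IP_norm \<beta>"
proof -
  have Cset_empty: "Cset {} = {0}"
    using IP_norm_eq[OF is_IP_of_empty] by (auto simp: Cset_def)
  have ne: "Cset \<beta> \<noteq> {}"
    using IH_zero_in_Cset[OF \<beta>] by blast
  have "(SUP x\<in>Cset \<beta>. infdist x {0}) \<le> IP_norm \<beta>"
    by (rule cSUP_least[OF ne]) (simp add: Cset_iff dist_real_def)
  then show ?thesis
    using IH_zero_in_Cset[OF \<beta>] IH_norm_nonneg[OF \<beta>]
    by (simp add: dH_def hausdorff_dist_def Cset_empty)
qed

lemma d_alpha_empty_ge: "\<bar>Div_inf \<alpha> \<beta>\<bar> \<le> d_alpha \<alpha> \<beta> {}"
proof -
  have "correspondence \<beta> {} cs \<longleftrightarrow> cs = []" for cs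
    by (cases cs) (auto simp: correspondence_def)
  then have "d_alpha \<alpha> \<beta> {} = dis_alpha \<alpha> \<beta> {} []"
    by (simp add: d_alpha_def)
  then show ?thesis
    by (simp add: dis_alpha_def Div_inf_empty)
qed

lemma dH_small_d_alpha_large:
  assumes \<alpha>: "0 < \<alpha>" "\<alpha> < 1" and \<epsilon>: "0 < \<epsilon>"
  shows "\<exists>\<beta>\<in>IA \<alpha>. \<exists>\<gamma>\<in>IA \<alpha>. dH \<beta> \<gamma> < \<epsilon> \<and> d_alpha \<alpha> \<beta> \<gamma> > 1 / \<epsilon>"
proof -
  have \<Gamma>: "0 < Gamma (1 - \<alpha>)"
    using \<alpha> by simp
  obtain \<beta> where \<beta>: "\<beta> \<in> IA \<alpha>" and norm: "IP_norm \<beta> < \<epsilon>"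
    and Div: "Div_inf \<alpha> \<beta> = Gamma (1 - \<alpha>) * (2 / (\<epsilon> * Gamma (1 - \<alpha>)))"
    using exists_IA_small_norm_given_Div_inf[OF \<alpha>, of "2 / (\<epsilon> * Gamma (1 - \<alpha>))" \<epsilon>] \<Gamma> \<epsilon> by auto
  have "\<beta> \<in> IH"
    using \<beta> by (simp add: IA_def)
  then have "dH \<beta> {} < \<epsilon>"
    using dH_empty_le norm by fastforce
  moreover have "1 / \<epsilon> < d_alpha \<alpha> \<beta> {}"
  proof -
    have "1 / \<epsilon> < 2 / \<epsilon>"
      using \<epsilon> by (simp add: divide_strict_right_mono)
    also have "\<dots> \<le> d_alpha \<alpha> \<beta> {}"
      using d_alpha_empty_ge[of \<alpha> \<beta>] Div \<Gamma> \<epsilon> by simp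
    finally show ?thesis .
  qed
  ultimately show ?thesis
    using \<beta> empty_in_IA by blast
qed

theorem proposition3p5:
  fixes \<alpha> :: real
  assumes "0 < \<alpha>" and "\<alpha> < 1"
  shows "(\<forall>\<epsilon>>0. \<exists>\<beta>\<in>IA \<alpha>. \<exists>\<gamma>\<in>IA \<alpha>. dH \<beta> \<gamma> < \<epsilon> \<and> d_alpha \<alpha> \<beta> \<gamma> > 1 / \<epsilon>)
       \<and> (\<forall>\<beta>\<in>IA \<alpha>. \<forall>\<gamma>\<in>IA \<alpha>. dH' \<beta> \<gamma> \<le> d_alpha \<alpha> \<beta> \<gamma>)
       \<and> (\<forall>S. metric_open IH dH S \<longleftrightarrow> metric_open IH dH' S)"
  using dH_small_d_alpha_large[OF assms] dH'_le_d_alpha metric_open_dH_iff_dH'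
  by (auto simp: IA_def)

end
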